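(* For every $k\in\mathbb{N}$ and every $i,j\in\{0,1,\dots,2^k-1\}$, $\mathrm{lcis}(\alpha_k^0\cdots\alpha_k^i,\ \beta_k^0\cdots\beta_k^j)=i+j+2^k$.
   Context: $\mathrm{lcis}(X,Y)$ denotes the length of the longest strictly increasing common subsequence of integer sequences $X,Y$. For $A=\langle a_0,\dots,a_{n-1}\rangle$, $\mathrm{inflate}(A)=\langle 2a_0-1,2a_0,\dots,2a_{n-1}-1,2a_{n-1}\rangle$; $\circ$ and juxtaposition denote concatenation. Separator sequences: for each $k\in\mathbb{N}$, $A_k=\alpha_k^0\cdots\alpha_k^{2^k-1}$ and $B_k=\beta_k^0\cdots\beta_k^{2^k-1}$ are concatenations of $2^k$ blocks, defined inductively. $A_0=B_0=\langle 1\rangle$ (a single block). Let $s_k$ be the largest element of $A_k$ and $B_k$ (one has $s_k=2^{k+2}-3$). For $i\in\{0,\dots,2^k-1\}$: $\alpha_{k+1}^{2i}=\mathrm{inflate}(\alpha_k^i)\circ\langle 2s_k+2\rangle$, $\alpha_{k+1}^{2i+1}=\langle 2s_k+1,2s_k+3\rangle$, $\beta_{k+1}^{2i}=\mathrm{inflate}(\beta_k^i)\circ\langle 2s_k+1\rangle$, $\beta_{k+1}^{2i+1}=\langle 2s_k+2,2s_k+3\rangle$. *)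

theory Defs
  imports Main "HOL-Library.Sublist"
begin

definition lcis :: "int list \<Rightarrow> int list \<Rightarrow> nat" where
  "lcis X Y = Max {length Z | Z. subseq Z X \<and> subseq Z Y \<and> sorted_wrt (<) Z}"

definition inflate :: "int list \<Rightarrow> int list" where
  "inflate A = concat (map (\<lambda>a. [2*a - 1, 2*a]) A)"

text \<open>sep_blocks k = (alpha_k, beta_k), where alpha_k i is the block alpha_k^i
  (meaningful for i < 2^k). s_k is the largest element of A_k and B_k.\<close>
primrec sep_blocks :: "nat \<Rightarrow> (nat \<Rightarrow> int list) \<times> (nat \<Rightarrow> int list)" where
  "sep_blocks 0 = (\<lambda>i. [1], \<lambda>i. [1])"
| "sep_blocks (Suc k) =
    (let a = fst (sep_blocks k); b = snd (sep_blocks k);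
         s = Max (set (concat (map a [0..<2^k])) \<union> set (concat (map b [0..<2^k])))
     in (\<lambda>i. if even i then inflate (a (i div 2)) @ [2*s + 2] else [2*s + 1, 2*s + 3],
         \<lambda>i. if even i then inflate (b (i div 2)) @ [2*s + 1] else [2*s + 2, 2*s + 3]))"

definition alpha :: "nat \<Rightarrow> nat \<Rightarrow> int list" where
  "alpha k i = fst (sep_blocks k) i"

definition beta :: "nat \<Rightarrow> nat \<Rightarrow> int list" where
  "beta k i = snd (sep_blocks k) i"

end

theory Submission
  imports Defs
begin

text \<open>The entries \<open>\<le> 2s\<^sub>k\<close> of a level-\<open>(k+1)\<close> prefix form the inflation
  of a level-\<open>k\<close> prefix of about half the length, and inflation exactly doubles \<open>lcis\<close>: the
  even and the odd entries of a common increasing subsequence of two inflated sequences each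
  halve to a common increasing subsequence of the originals. A common increasing subsequence
  of the level-\<open>(k+1)\<close> prefixes is therefore a low part, bounded by the induction hypothesis
  applied to the prefixes ending at the blocks \<open>u\<close>, \<open>v\<close> holding its first high entry,
  followed by at most three high entries among \<open>2s\<^sub>k+1 < 2s\<^sub>k+2 < 2s\<^sub>k+3\<close>. Where these
  values sit in the even and odd blocks of the two separators forces \<open>u\<close>, \<open>v\<close> far enough
  below \<open>i\<close>, \<open>j\<close> to pay for them. Conversely the inflated optimal level-\<open>k\<close>
  witness, followed by the high entries common to the two last blocks, attains the bound.\<close>

lemma set_mono_subseq: "subseq xs ys \<Longrightarrow> set xs \<subseteq> set ys"
  by (induction rule: list_emb.induct) auto

lemma subseq_append_ConsE:
  assumes "subseq (xs @ y # ys) zs"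
  obtains us vs where "zs = us @ y # vs" "subseq xs us" "subseq ys vs"
proof -
  obtain us ws where "zs = us @ ws" "subseq xs us" "subseq (y # ys) ws"
    using list_emb_appendD[OF assms] by blast
  moreover obtain ws1 ws2 where "ws = ws1 @ y # ws2" "subseq ys ws2"
    using list_emb_ConsD[OF \<open>subseq (y # ys) ws\<close>] by blast
  ultimately show ?thesis
    using that[of "us @ ws1" ws2] by (simp add: subseq_rev_drop_many)
qed

lemma concat_map_upt_eq_append_ConsD:
  "concat (map f [0..<n]) = P @ x # R \<Longrightarrow> \<exists>u<n. \<exists>B1 B2. f u = B1 @ x # B2 \<and>
     P = concat (map f [0..<u]) @ B1 \<and> R = B2 @ concat (map f [Suc u..<n])"
proof (induction n arbitrary: R)
  case (Suc n)
  then have split: "concat (map f [0..<n]) @ f n = P @ x # R"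
    by simp
  show ?case
  proof (cases "length P < length (concat (map f [0..<n]))")
    case True
    then obtain R' where "concat (map f [0..<n]) = P @ x # R'" "R = R' @ f n"
      using split by (auto simp: append_eq_append_conv2 append_eq_Cons_conv)
    then show ?thesis
      using Suc.IH by fastforce
  next
    case False
    then obtain B1 where "P = concat (map f [0..<n]) @ B1" "f n = B1 @ x # R"
      using split by (auto simp: append_eq_append_conv2)
    then show ?thesis
      by (intro exI[of _ n]) auto
  qed
qed simp

lemma subseq_via_filter:
  assumes "\<forall>x\<in>set xs. P x" "subseq xs ys" "subseq (filter P ys) zs"
  shows "subseq xs zs"
  using subseq_order.order_trans[OF subseq_filter[OF assms(2), of P] assms(3)] assms(1)
  by (simp add: filter_id_conv)

lemma length_sorted_wrt_less_le:
  fixes xs :: "int list"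
  assumes "sorted_wrt (<) xs" "\<And>x. x \<in> set xs \<Longrightarrow> lo < x \<and> x \<le> hi"
  shows "length xs \<le> nat (hi - lo)"
proof -
  have "length xs = card (set xs)"
    using assms(1) by (simp add: distinct_card strict_sorted_iff)
  also have "\<dots> \<le> card {lo<..hi}"
    using assms(2) by (intro card_mono) auto
  finally show ?thesis
    by simp
qed

lemma div_two_less_pow: "u < 2^Suc k \<Longrightarrow> u div 2 < (2::nat)^k"
  by (simp add: less_mult_imp_div_less mult.commute)

lemma half_less_half_same_parity:
  fixes x y :: int
  assumes "x < y" "even x \<longleftrightarrow> even y"
  shows "(x + 1) div 2 < (y + 1) div 2"
  using assms by presburger

lemma lcis_lengths_finite:
  "finite {length Z | Z. subseq Z X \<and> subseq Z Y \<and> sorted_wrt (<) Z}"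
proof -
  have "{length Z | Z. subseq Z X \<and> subseq Z Y \<and> sorted_wrt (<) Z} \<subseteq> {..length X}"
    using list_emb_length by fastforce
  then show ?thesis
    using finite_subset by blast
qed

lemma length_le_lcis:
  assumes "sorted_wrt (<) Z" "subseq Z X" "subseq Z Y"
  shows "length Z \<le> lcis X Y"
  unfolding lcis_def using assms by (intro Max_ge[OF lcis_lengths_finite]) blast

lemma lcis_witness:
  obtains Z where "sorted_wrt (<) Z" "subseq Z X" "subseq Z Y" "length Z = lcis X Y"
proof -
  have "lcis X Y \<in> {length Z | Z. subseq Z X \<and> subseq Z Y \<and> sorted_wrt (<) Z}"
    unfolding lcis_def by (rule Max_in[OF lcis_lengths_finite]) (use list_emb_Nil in fastforce)
  then show ?thesis
    using that by force
qed

lemma lcis_eqI: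
  assumes "sorted_wrt (<) Z" "subseq Z X" "subseq Z Y" "length Z = n"
    and "\<And>Z. sorted_wrt (<) Z \<Longrightarrow> subseq Z X \<Longrightarrow> subseq Z Y \<Longrightarrow> length Z \<le> n"
  shows "lcis X Y = n"
  by (metis assms le_antisym length_le_lcis lcis_witness)

lemma lcis_singleton: "lcis [x] [x] = 1"
  by (rule lcis_eqI[of "[x]"]) (auto dest: list_emb_length)

lemma inflate_Nil [simp]: "inflate [] = []"
  by (simp add: inflate_def)

lemma inflate_Cons [simp]: "inflate (a # A) = (2*a - 1) # 2*a # inflate A"
  by (simp add: inflate_def)

lemma inflate_append [simp]: "inflate (A @ B) = inflate A @ inflate B"
  by (simp add: inflate_def)

lemma length_inflate [simp]: "length (inflate A) = 2 * length A"
  by (induction A) simp_all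

lemma set_inflate: "set (inflate A) = (\<lambda>a. 2*a - 1) ` set A \<union> (\<lambda>a. 2*a) ` set A"
  by (induction A) auto

lemma set_inflate_le: "(\<And>a. a \<in> set A \<Longrightarrow> a \<le> s) \<Longrightarrow> x \<in> set (inflate A) \<Longrightarrow> x \<le> 2*s"
  by (fastforce simp: set_inflate)

lemma subseq_inflate: "subseq Z X \<Longrightarrow> subseq (inflate Z) (inflate X)"
  by (induction rule: list_emb.induct) (auto simp: subseq_drop_many)

lemma sorted_inflate: "sorted_wrt (<) Z \<Longrightarrow> sorted_wrt (<) (inflate Z)"
  by (induction Z) (auto simp: set_inflate)

lemma length_same_parity_le_lcis:
  assumes Z: "sorted_wrt (<) Z" "subseq Z (inflate X)" "subseq Z (inflate Y)"
    and par: "\<And>x. x \<in> set Z \<Longrightarrow> even x \<longleftrightarrow> b"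
  shows "length Z \<le> lcis X Y"
proof -
  define half :: "int \<Rightarrow> int" where "half x = (x + 1) div 2" for x
  have "Z = filter (\<lambda>x. even x \<longleftrightarrow> b) Z"
    using par by (simp add: filter_id_conv)
  moreover have "map half (filter (\<lambda>x. even x \<longleftrightarrow> b) (inflate A)) = A" for A
    by (induction A) (auto simp: half_def)
  ultimately have "subseq (map half Z) X" "subseq (map half Z) Y"
    using Z(2,3) by (metis subseq_filter subseq_map)+
  moreover have "sorted_wrt (<) (map half Z)"
    unfolding sorted_wrt_map half_def
    by (rule sorted_wrt_mono_rel[OF _ Z(1)]) (use par half_less_half_same_parity in blast)
  ultimately show ?thesis
    using length_le_lcis by fastforce
qed

lemma lcis_inflate: "lcis (inflate X) (inflate Y) = 2 * lcis X Y"
proof -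
  obtain W where W: "sorted_wrt (<) W" "subseq W X" "subseq W Y" "length W = lcis X Y"
    by (rule lcis_witness)
  show ?thesis
  proof (rule lcis_eqI[of "inflate W"])
    fix Z assume Z: "sorted_wrt (<) Z" "subseq Z (inflate X)" "subseq Z (inflate Y)"
    have "length (filter (\<lambda>x. even x \<longleftrightarrow> b) Z) \<le> lcis X Y" for b
      using Z by (intro length_same_parity_le_lcis)
        (auto intro: sorted_wrt_filter subseq_order.order_trans[OF subseq_filter_left])
    from this[of True] this[of False] show "length Z \<le> 2 * lcis X Y"
      using sum_length_filter_compl[of even Z] by simp
  qed (use W in \<open>simp_all add: sorted_inflate subseq_inflate\<close>)
qed

abbreviation blocks :: "(nat \<Rightarrow> int list) \<Rightarrow> nat \<Rightarrow> int list" where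
  "blocks f n \<equiv> concat (map f [0..<n])"

definition next_blocks :: "(nat \<Rightarrow> int list) \<Rightarrow> int \<Rightarrow> int \<Rightarrow> int \<Rightarrow> nat \<Rightarrow> int list" where
  "next_blocks f s c d i = (if even i then inflate (f (i div 2)) @ [c] else [d, 2*s + 3])"

context
  fixes k :: nat and f :: "nat \<Rightarrow> int list" and s c d :: int
  assumes bounded: "\<forall>t<2^k. \<forall>x\<in>set (f t). x \<le> s"
    and c_high: "2*s < c" and d_high: "2*s < d"
begin

lemma filter_low_blocks_next:
  "n \<le> 2^Suc k \<Longrightarrow>
    filter (\<lambda>x. x \<le> 2*s) (blocks (next_blocks f s c d) n) = inflate (blocks f ((n + 1) div 2))"
proof (induction n)
  case (Suc n)
  have "n div 2 < 2^k"
    using Suc.prems div_two_less_pow by simp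
  then have "\<forall>x\<in>set (inflate (f (n div 2))). x \<le> 2*s"
    using bounded set_inflate_le by blast
  then have "filter (\<lambda>x. x \<le> 2*s) (next_blocks f s c d n)
      = (if even n then inflate (f (n div 2)) else [])"
    using c_high d_high by (simp add: next_blocks_def)
  moreover have "(Suc n + 1) div 2 = (if even n then Suc (n div 2) else (n + 1) div 2)"
    "even n \<Longrightarrow> (n + 1) div 2 = n div 2"
    by presburger+
  ultimately show ?case
    using Suc by simp
qed simp

lemma blocks_next_le:
  assumes "c \<le> 2*s + 3" "d \<le> 2*s + 3" "n \<le> 2^Suc k" "x \<in> set (blocks (next_blocks f s c d) n)"
  shows "x \<le> 2*s + 3"
proof -
  obtain t where t: "t < n" "x \<in> set (next_blocks f s c d t)"
    using assms(4) by auto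
  have "t div 2 < 2^k"
    using t(1) assms(3) div_two_less_pow by simp
  then show ?thesis
    using t(2) assms(1,2) bounded set_inflate_le[of "f (t div 2)" s x]
    by (auto simp: next_blocks_def split: if_splits)
qed

lemma blocks_next_split_high:
  assumes "i < 2^Suc k" "blocks (next_blocks f s c d) (Suc i) = P @ h # R" "2*s < h"
  obtains u where "u \<le> i"
    "subseq (filter (\<lambda>x. x \<le> 2*s) P) (inflate (blocks f (Suc (u div 2))))"
    "h = c \<and> even u \<and> (u = i \<longrightarrow> R = []) \<or> h = d \<and> odd u \<and> (u = i \<longrightarrow> R = [2*s + 3])
      \<or> h = 2*s + 3 \<and> odd u"
proof -
  let ?G = "next_blocks f s c d"
  obtain u B1 B2 where u: "u < Suc i" "?G u = B1 @ h # B2"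
    "P = blocks ?G u @ B1" "R = B2 @ concat (map ?G [Suc u..<Suc i])"
    using concat_map_upt_eq_append_ConsD[OF assms(2)] by blast
  have "subseq P (blocks ?G (Suc u))"
    using u(2,3) by (simp add: subseq_append' subseq_rev_drop_many)
  moreover have "filter (\<lambda>x. x \<le> 2*s) (blocks ?G (Suc u)) = inflate (blocks f (Suc (u div 2)))"
    using filter_low_blocks_next[of "Suc u"] u(1) assms(1) by simp
  ultimately have low: "subseq (filter (\<lambda>x. x \<le> 2*s) P) (inflate (blocks f (Suc (u div 2))))"
    by (metis subseq_filter)
  have "h = c \<and> even u \<and> B2 = [] \<or> h = d \<and> odd u \<and> B2 = [2*s + 3] \<or> h = 2*s + 3 \<and> odd u"
  proof (cases "even u")
    case True
    then have block: "inflate (f (u div 2)) @ [c] = B1 @ h # B2"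
      using u(2) by (simp add: next_blocks_def)
    have "u div 2 < 2^k"
      using u(1) assms(1) div_two_less_pow by simp
    then have "h \<notin> set (inflate (f (u div 2)))"
      using assms(3) bounded set_inflate_le by fastforce
    then have "B2 = [] \<and> h = c"
      using block by (cases B2 rule: rev_cases) auto
    then show ?thesis
      using True by simp
  next
    case False
    then have "[d, 2*s + 3] = B1 @ h # B2"
      using u(2) by (simp add: next_blocks_def)
    then show ?thesis
      using False by (auto simp: Cons_eq_append_conv append_eq_Cons_conv)
  qed
  then show ?thesis
    using that[OF _ low] u(1,4) by auto
qed

lemma subseq_blocks_next:
  assumes "i < 2^Suc k"
  shows "subseq (inflate (blocks f (Suc (i div 2))) @ (if even i then [c] else [c, d, 2*s + 3]))
    (blocks (next_blocks f s c d) (Suc i))"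
proof -
  let ?G = "next_blocks f s c d"
  define m where "m = i div 2"
  have low: "filter (\<lambda>x. x \<le> 2*s) (blocks ?G (2*m)) = inflate (blocks f m)"
    using filter_low_blocks_next[of "2*m"] assms unfolding m_def by simp
  have "subseq (filter (\<lambda>x. x \<le> 2*s) (blocks ?G (2*m)) @ inflate (f m) @ [c])
      (blocks ?G (2*m) @ inflate (f m) @ [c])"
    by (rule list_emb_append_mono) simp_all
  then have even_prefix: "subseq (inflate (blocks f (Suc m)) @ [c]) (blocks ?G (Suc (2*m)))"
    by (simp add: low next_blocks_def)
  show ?thesis
  proof (cases "even i")
    case True
    then show ?thesis
      using even_prefix by (simp add: m_def)
  next
    case False
    then have "i = Suc (2*m)"
      unfolding m_def by presburger
    then show ?thesis
      using list_emb_append_mono[OF even_prefix, of "[d, 2*s + 3]" "[d, 2*s + 3]"] False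
      by (simp add: m_def next_blocks_def)
  qed
qed

end

definition next_alpha :: "(nat \<Rightarrow> int list) \<Rightarrow> int \<Rightarrow> nat \<Rightarrow> int list" where
  "next_alpha f s = next_blocks f s (2*s + 2) (2*s + 1)"

definition next_beta :: "(nat \<Rightarrow> int list) \<Rightarrow> int \<Rightarrow> nat \<Rightarrow> int list" where
  "next_beta g s = next_blocks g s (2*s + 1) (2*s + 2)"

lemma high_tail_count:
  fixes s h :: int and u v i j :: nat and RX RY H :: "int list"
  assumes "u \<le> i" "v \<le> j"
    and "h = 2*s + 2 \<and> even u \<and> (u = i \<longrightarrow> RX = []) \<or>
      h = 2*s + 1 \<and> odd u \<and> (u = i \<longrightarrow> RX = [2*s + 3]) \<or> h = 2*s + 3 \<and> odd u"
    and "h = 2*s + 1 \<and> even v \<and> (v = j \<longrightarrow> RY = []) \<or>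
      h = 2*s + 2 \<and> odd v \<and> (v = j \<longrightarrow> RY = [2*s + 3]) \<or> h = 2*s + 3 \<and> odd v"
    and "length H \<le> length RX" "length H \<le> length RY" "length H \<le> nat (2*s + 3 - h)"
  shows "2 * (u div 2) + 2 * (v div 2) + 1 + length H \<le> i + j"
  using assms by (auto elim!: evenE oddE)

context
  fixes k :: nat and f g :: "nat \<Rightarrow> int list" and s :: int
  assumes bounded_f: "\<forall>t<2^k. \<forall>x\<in>set (f t). x \<le> s"
    and bounded_g: "\<forall>t<2^k. \<forall>x\<in>set (g t). x \<le> s"
    and lcis_prefixes: "\<And>a b. a < 2^k \<Longrightarrow> b < 2^k \<Longrightarrow>
      lcis (blocks f (Suc a)) (blocks g (Suc b)) = a + b + 2^k"
begin

lemma length_low_common_le: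
  assumes "a < 2^k" "b < 2^k" "sorted_wrt (<) L"
    "subseq L (inflate (blocks f (Suc a)))" "subseq L (inflate (blocks g (Suc b)))"
  shows "length L \<le> 2 * (a + b + 2^k)"
  using length_le_lcis[OF assms(3-5)] unfolding lcis_inflate lcis_prefixes[OF assms(1,2)] .

lemma common_subseq_next:
  assumes i: "i < 2^Suc k" and j: "j < 2^Suc k"
  obtains Z where "sorted_wrt (<) Z" "subseq Z (blocks (next_alpha f s) (Suc i))"
    "subseq Z (blocks (next_beta g s) (Suc j))" "length Z = i + j + 2^Suc k"
proof -
  define a b where "a = i div 2" and "b = j div 2"
  have ab: "a < 2^k" "b < 2^k"
    unfolding a_def b_def using div_two_less_pow i j by auto
  obtain W where W: "sorted_wrt (<) W" "subseq W (blocks f (Suc a))" "subseq W (blocks g (Suc b))"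
    "length W = lcis (blocks f (Suc a)) (blocks g (Suc b))"
    by (rule lcis_witness)
  have W_low: "x \<le> s" if x: "x \<in> set W" for x
  proof -
    obtain t where "t < Suc a" "x \<in> set (f t)"
      using set_mono_subseq[OF W(2)] x by (auto simp del: upt_Suc)
    moreover from \<open>t < Suc a\<close> ab(1) have "t < 2^k"
      by simp
    ultimately show ?thesis
      using bounded_f by blast
  qed
  define E where "E = (if even i then (if even j then [] else [2*s + 2])
    else (if even j then [2*s + 1] else [2*s + 1, 2*s + 3]))"
  have "subseq (inflate W @ E) (inflate (blocks f (Suc a)) @
      (if even i then [2*s + 2] else [2*s + 2, 2*s + 1, 2*s + 3]))"
    using W(2) by (intro list_emb_append_mono subseq_inflate) (simp_all add: E_def)
  moreover have "subseq (inflate (blocks f (Suc a)) @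
      (if even i then [2*s + 2] else [2*s + 2, 2*s + 1, 2*s + 3])) (blocks (next_alpha f s) (Suc i))"
    using subseq_blocks_next[OF bounded_f, where c = "2*s + 2" and d = "2*s + 1"] i
    unfolding next_alpha_def a_def by simp
  ultimately have X: "subseq (inflate W @ E) (blocks (next_alpha f s) (Suc i))"
    by (rule subseq_order.order_trans)
  have "subseq (inflate W @ E) (inflate (blocks g (Suc b)) @
      (if even j then [2*s + 1] else [2*s + 1, 2*s + 2, 2*s + 3]))"
    using W(3) by (intro list_emb_append_mono subseq_inflate) (simp_all add: E_def)
  moreover have "subseq (inflate (blocks g (Suc b)) @
      (if even j then [2*s + 1] else [2*s + 1, 2*s + 2, 2*s + 3])) (blocks (next_beta g s) (Suc j))"
    using subseq_blocks_next[OF bounded_g, where c = "2*s + 1" and d = "2*s + 2"] j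
    unfolding next_beta_def b_def by simp
  ultimately have Y: "subseq (inflate W @ E) (blocks (next_beta g s) (Suc j))"
    by (rule subseq_order.order_trans)
  have "sorted_wrt (<) (inflate W @ E)"
    using sorted_inflate[OF W(1)] set_inflate_le[OF W_low]
    by (fastforce simp: sorted_wrt_append E_def)
  moreover have "length (inflate W @ E) = i + j + 2^Suc k"
    using W(4) lcis_prefixes[OF ab] unfolding E_def a_def b_def by (auto elim!: evenE oddE)
  ultimately show ?thesis
    using that X Y by blast
qed

lemma low_common_subseq_next_length_le:
  assumes i: "i < 2^Suc k" and j: "j < 2^Suc k"
    and L: "sorted_wrt (<) L" "\<forall>x\<in>set L. x \<le> 2*s"
    and LX: "subseq L (blocks (next_alpha f s) (Suc i))"
    and LY: "subseq L (blocks (next_beta g s) (Suc j))"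
  shows "length L \<le> i + j + 2^Suc k"
proof -
  have "filter (\<lambda>x. x \<le> 2*s) (blocks (next_alpha f s) (Suc i)) = inflate (blocks f (Suc (i div 2)))"
    using filter_low_blocks_next[OF bounded_f, where c = "2*s + 2" and d = "2*s + 1" and n = "Suc i"] i
    unfolding next_alpha_def by simp
  then have X: "subseq L (inflate (blocks f (Suc (i div 2))))"
    using subseq_via_filter[OF L(2) LX] by simp
  have "filter (\<lambda>x. x \<le> 2*s) (blocks (next_beta g s) (Suc j)) = inflate (blocks g (Suc (j div 2)))"
    using filter_low_blocks_next[OF bounded_g, where c = "2*s + 1" and d = "2*s + 2" and n = "Suc j"] j
    unfolding next_beta_def by simp
  then have Y: "subseq L (inflate (blocks g (Suc (j div 2))))"
    using subseq_via_filter[OF L(2) LY] by simp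
  have "length L \<le> 2 * (i div 2 + j div 2 + 2^k)"
    using length_low_common_le[OF div_two_less_pow[OF i] div_two_less_pow[OF j] L(1) X Y] .
  then show ?thesis
    by simp
qed

lemma high_common_subseq_next_length_le:
  assumes i: "i < 2^Suc k" and j: "j < 2^Suc k"
    and Z: "sorted_wrt (<) (L @ h # H)" and L_low: "\<forall>x\<in>set L. x \<le> 2*s" and h_high: "2*s < h"
    and ZX: "subseq (L @ h # H) (blocks (next_alpha f s) (Suc i))"
    and ZY: "subseq (L @ h # H) (blocks (next_beta g s) (Suc j))"
  shows "length (L @ h # H) \<le> i + j + 2^Suc k"
proof -
  have "x \<le> 2*s + 3" if "x \<in> set H" for x
  proof -
    have "x \<in> set (blocks (next_blocks f s (2*s + 2) (2*s + 1)) (Suc i))"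
      using set_mono_subseq[OF ZX] that unfolding next_alpha_def by auto
    then show ?thesis
      using blocks_next_le[OF bounded_f, where c = "2*s + 2" and d = "2*s + 1" and n = "Suc i"] i
      by simp
  qed
  then have H_count: "length H \<le> nat (2*s + 3 - h)"
    using Z length_sorted_wrt_less_le by (simp add: sorted_wrt_append)
  obtain PX RX where X: "blocks (next_alpha f s) (Suc i) = PX @ h # RX" "subseq L PX" "subseq H RX"
    using subseq_append_ConsE[OF ZX] .
  obtain PY RY where Y: "blocks (next_beta g s) (Suc j) = PY @ h # RY" "subseq L PY" "subseq H RY"
    using subseq_append_ConsE[OF ZY] .
  obtain u where u: "u \<le> i" "subseq (filter (\<lambda>x. x \<le> 2*s) PX) (inflate (blocks f (Suc (u div 2))))"
    "h = 2*s + 2 \<and> even u \<and> (u = i \<longrightarrow> RX = []) \<or>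
     h = 2*s + 1 \<and> odd u \<and> (u = i \<longrightarrow> RX = [2*s + 3]) \<or> h = 2*s + 3 \<and> odd u"
    by (rule blocks_next_split_high[OF bounded_f _ _ i X(1)[unfolded next_alpha_def] h_high]) auto
  obtain v where v: "v \<le> j" "subseq (filter (\<lambda>x. x \<le> 2*s) PY) (inflate (blocks g (Suc (v div 2))))"
    "h = 2*s + 1 \<and> even v \<and> (v = j \<longrightarrow> RY = []) \<or>
     h = 2*s + 2 \<and> odd v \<and> (v = j \<longrightarrow> RY = [2*s + 3]) \<or> h = 2*s + 3 \<and> odd v"
    by (rule blocks_next_split_high[OF bounded_g _ _ j Y(1)[unfolded next_beta_def] h_high]) auto
  have "u div 2 < 2^k" "v div 2 < 2^k"
    using u(1) v(1) i j by (simp_all add: div_two_less_pow)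
  moreover have "sorted_wrt (<) L"
    using Z by (simp add: sorted_wrt_append)
  ultimately have "length L \<le> 2 * (u div 2 + v div 2 + 2^k)"
    using length_low_common_le subseq_via_filter[OF L_low X(2) u(2)]
      subseq_via_filter[OF L_low Y(2) v(2)] by blast
  moreover have "2 * (u div 2) + 2 * (v div 2) + 1 + length H \<le> i + j"
    using high_tail_count[OF u(1) v(1) u(3) v(3)] X(3) Y(3) H_count
    by (simp add: list_emb_length)
  ultimately show ?thesis
    by simp
qed

lemma common_subseq_next_length_le:
  assumes i: "i < 2^Suc k" and j: "j < 2^Suc k" and Z: "sorted_wrt (<) Z"
    and ZX: "subseq Z (blocks (next_alpha f s) (Suc i))"
    and ZY: "subseq Z (blocks (next_beta g s) (Suc j))"
  shows "length Z \<le> i + j + 2^Suc k"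
proof -
  define L where "L = takeWhile (\<lambda>x. x \<le> 2*s) Z"
  have Z_split: "Z = L @ dropWhile (\<lambda>x. x \<le> 2*s) Z"
    unfolding L_def by simp
  have L_low: "\<forall>x\<in>set L. x \<le> 2*s"
    unfolding L_def by (blast dest: set_takeWhileD)
  show ?thesis
  proof (cases "dropWhile (\<lambda>x. x \<le> 2*s) Z")
    case Nil
    with Z_split have "Z = L"
      by simp
    then show ?thesis
      using low_common_subseq_next_length_le[OF i j _ L_low] Z ZX ZY by simp
  next
    case (Cons h H)
    then have "2*s < h"
      using hd_dropWhile[of "\<lambda>x. x \<le> 2*s" Z] by simp
    moreover from Z_split Cons have "Z = L @ h # H"
      by simp
    ultimately show ?thesis
      using high_common_subseq_next_length_le[OF i j _ L_low] Z ZX ZY by simp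
  qed
qed

lemma lcis_next:
  assumes "i < 2^Suc k" "j < 2^Suc k"
  shows "lcis (blocks (next_alpha f s) (Suc i)) (blocks (next_beta g s) (Suc j)) = i + j + 2^Suc k"
proof -
  obtain Z where "sorted_wrt (<) Z" "subseq Z (blocks (next_alpha f s) (Suc i))"
    "subseq Z (blocks (next_beta g s) (Suc j))" "length Z = i + j + 2^Suc k"
    using common_subseq_next[OF assms] .
  then show ?thesis
    using common_subseq_next_length_le[OF assms] by (rule lcis_eqI)
qed

end

definition sep_max :: "nat \<Rightarrow> int" where
  "sep_max k = Max (set (blocks (alpha k) (2^k)) \<union> set (blocks (beta k) (2^k)))"

lemma alpha_Suc: "alpha (Suc k) = next_alpha (alpha k) (sep_max k)"
  by (simp add: alpha_def beta_def sep_max_def next_alpha_def next_blocks_def Let_def fun_eq_iff)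

lemma beta_Suc: "beta (Suc k) = next_beta (beta k) (sep_max k)"
  by (simp add: alpha_def beta_def sep_max_def next_beta_def next_blocks_def Let_def fun_eq_iff)

lemma alpha_le_sep_max: "\<forall>t<2^k. \<forall>x\<in>set (alpha k t). x \<le> sep_max k"
  unfolding sep_max_def by (auto intro!: Max_ge)

lemma beta_le_sep_max: "\<forall>t<2^k. \<forall>x\<in>set (beta k t). x \<le> sep_max k"
  unfolding sep_max_def by (auto intro!: Max_ge)

theorem lemma11:
  fixes k i j :: nat
  assumes "i < 2^k" and "j < 2^k"
  shows "lcis (concat (map (alpha k) [0..<Suc i])) (concat (map (beta k) [0..<Suc j]))
         = i + j + 2^k"
  using assms
proof (induction k arbitrary: i j)
  case 0
  then show ?case
    by (simp add: alpha_def beta_def lcis_singleton)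
next
  case (Suc k)
  show ?case
    unfolding alpha_Suc beta_Suc
    by (rule lcis_next[OF alpha_le_sep_max beta_le_sep_max Suc.IH Suc.prems])
qed

end
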